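(* Let $N=k_1 b_1=k_2 b_2$ with positive integers $k_1,b_1,k_2,b_2$. Let $\mathcal{B}_1\cong\mathrm{O}(b_1)^{k_1}$ be the group of $N\times N$ block-diagonal matrices with $k_1$ orthogonal diagonal blocks of size $b_1\times b_1$, and $\mathcal{B}_2\cong \mathrm{O}(b_2)^{k_2}$ the group of $N\times N$ block-diagonal matrices with $k_2$ orthogonal diagonal blocks of size $b_2\times b_2$; let $G=\mathcal{B}_2\times\mathcal{B}_1$. Let $P_1$ be the $N\times N$ perfect shuffle permutation matrix defined by $P_1(e_a\otimes e_c)=e_c\otimes e_a$ for all standard basis vectors $e_a\in\mathbb{R}^{k_1}$, $e_c\in\mathbb{R}^{b_1}$ (so that $P_1(X\otimes Y)P_1^\top=Y\otimes X$ for all $X\in\mathbb{R}^{k_1\times k_1}$, $Y\in\mathbb{R}^{b_1\times b_1}$). Consider the stabilizer $$\operatorname{Stab}_G(P_1)=\{(B_2,B_1)\in G : B_2 P_1 B_1^\top = P_1\}.$$ If $k_1\ge b_2$, then every $(B_2,B_1)\in\operatorname{Stab}_G(P_1)$ has $B_2$ diagonal with diagonal entries in $\{\pm1\}$ (and $B_1=P_1^\top B_2 P_1$); in particular $\operatorname{Stab}_G(P_1)$ is a finite, hence discrete, subgroup of $G$. The same conclusion holds when all orthogonal blocks are required to lie in the special orthogonal groups $\mathrm{SO}(b_1)$, $\mathrm{SO}(b_2)$.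
   Context: The block-diagonal matrices in $\mathcal{B}_1$ have the form $\sum_{a=1}^{k_1} E_{aa}\otimes M_a$ with $E_{aa}$ the $k_1\times k_1$ matrix unit and $M_a\in\mathrm{O}(b_1)$. $\mathrm{SO}(m)$ denotes orthogonal $m\times m$ matrices of determinant $1$. *)

theory Defs
  imports "Jordan_Normal_Form.Determinant"
begin

definition orth_mats :: "nat \<Rightarrow> real mat set" where
  "orth_mats b = {M. M \<in> carrier_mat b b \<and> transpose_mat M * M = 1\<^sub>m b}"

definition sorth_mats :: "nat \<Rightarrow> real mat set" where
  "sorth_mats b = {M. M \<in> orth_mats b \<and> det M = 1}"

text \<open>Block-diagonal (k*b) x (k*b) matrix  sum_a E_aa (x) M_a  with blocks M_a (a < k).
  Index a*b + c corresponds to the basis vector e_a (x) e_c.\<close>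
definition block_diag :: "nat \<Rightarrow> nat \<Rightarrow> (nat \<Rightarrow> real mat) \<Rightarrow> real mat" where
  "block_diag k b M = mat (k*b) (k*b) (\<lambda>(i,j).
     if i div b = j div b then M (i div b) $$ (i mod b, j mod b) else 0)"

definition block_group :: "(nat \<Rightarrow> real mat set) \<Rightarrow> nat \<Rightarrow> nat \<Rightarrow> real mat set" where
  "block_group S k b = {block_diag k b M | M. \<forall>a<k. M a \<in> S b}"

text \<open>Perfect shuffle  P (e_a (x) e_c) = e_c (x) e_a,  e_a in R^k, e_c in R^b.
  Column a*b+c has its single 1 in row c*k+a.\<close>
definition perfect_shuffle :: "nat \<Rightarrow> nat \<Rightarrow> real mat" where
  "perfect_shuffle k b = mat (k*b) (k*b) (\<lambda>(i,j).
     if i = (j mod b) * k + j div b then 1 else 0)"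

definition stab :: "real mat set \<Rightarrow> real mat set \<Rightarrow> real mat \<Rightarrow> (real mat \<times> real mat) set" where
  "stab G2 G1 P = {(B2,B1). B2 \<in> G2 \<and> B1 \<in> G1 \<and> B2 * P * transpose_mat B1 = P}"

definition signed_diag :: "nat \<Rightarrow> real mat \<Rightarrow> bool" where
  "signed_diag n B \<longleftrightarrow> B \<in> carrier_mat n n \<and>
     (\<forall>i<n. \<forall>j<n. i \<noteq> j \<longrightarrow> B $$ (i,j) = 0) \<and> (\<forall>i<n. B $$ (i,i) \<in> {1, -1})"

end

theory Submission
  imports Defs
begin

(* Since B2 P B1^T = P with B1 orthogonal, B1 = P^T B2 P: conjugation by the perfect shuffle
   relates the two block structures. The entry (i, j) of B2 reappears in B1 in the b1-blocks
   number i mod k1 and j mod k1, so it vanishes unless i = j (mod k1). Block diagonality of B2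
   itself forces |i - j| < b2 <= k1 for its nonzero entries. Hence B2 is diagonal, and a
   diagonal orthogonal matrix has entries +1 or -1. As B2 determines B1, the stabilizer is
   finite. *)

definition shuffle_index :: "nat \<Rightarrow> nat \<Rightarrow> nat \<Rightarrow> nat" where
  "shuffle_index k b j = (j mod b) * k + j div b"

lemma shuffle_index_less:
  assumes "j < k * b"
  shows "shuffle_index k b j < k * b"
proof -
  have "0 < b" using assms by (cases b) auto
  then have "j mod b < b" by simp
  have "j div b < k" using assms by (simp add: less_mult_imp_div_less)
  then have "(j mod b) * k + j div b < (j mod b) * k + k" by simp
  also have "\<dots> = Suc (j mod b) * k" by simp
  also have "\<dots> \<le> b * k"
    using \<open>j mod b < b\<close> by (intro mult_le_mono1) simp
  also have "\<dots> = k * b" by simp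
  finally show ?thesis unfolding shuffle_index_def .
qed

lemma shuffle_index_div:
  assumes "j < k * b"
  shows "shuffle_index k b j div k = j mod b"
proof -
  have "j div b < k" using assms by (simp add: less_mult_imp_div_less)
  then show ?thesis by (simp add: shuffle_index_def)
qed

lemma shuffle_index_mod:
  assumes "j < k * b"
  shows "shuffle_index k b j mod k = j div b"
proof -
  have "j div b < k" using assms by (simp add: less_mult_imp_div_less)
  then show ?thesis by (simp add: shuffle_index_def)
qed

lemma shuffle_index_shuffle_index:
  assumes "j < k * b"
  shows "shuffle_index b k (shuffle_index k b j) = j"
  using assms by (simp add: shuffle_index_def[of b k] shuffle_index_div shuffle_index_mod)

lemma shuffle_index_inj:
  assumes "i < k * b" "j < k * b" "shuffle_index k b i = shuffle_index k b j"
  shows "i = j"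
  using assms shuffle_index_shuffle_index by metis

lemma eq_if_div_eq_mod_eq:
  fixes i j b k :: nat
  assumes "0 < b" "b \<le> k" "i div b = j div b" "i mod k = j mod k"
  shows "i = j"
proof -
  have "i = i div b * b + i mod b" "j = i div b * b + j mod b"
    using assms(3) by (metis div_mult_mod_eq)+
  moreover have "i mod b < b" "j mod b < b"
    using assms(1) by simp_all
  ultimately have "i - j < k" "j - i < k" using assms(2) by linarith+
  moreover have "k dvd i - j"
    using assms(4) mod_eq_dvd_iff_nat[of j i k] by (cases "j \<le> i") auto
  moreover have "k dvd j - i"
    using assms(4) mod_eq_dvd_iff_nat[of i j k] by (cases "i \<le> j") auto
  ultimately have "i - j = 0" "j - i = 0" using nat_dvd_not_less by blast+
  then show ?thesis by simp
qed

lemma index_mult_mat_sum: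
  fixes A B :: "'a::comm_semiring_0 mat"
  assumes "A \<in> carrier_mat n m" "B \<in> carrier_mat m p" "i < n" "j < p"
  shows "(A * B) $$ (i,j) = (\<Sum>l<m. A $$ (i,l) * B $$ (l,j))"
  using assms by (simp add: scalar_prod_def lessThan_atLeast0)

lemma dim_perfect_shuffle [simp]:
  "dim_row (perfect_shuffle k b) = k*b" "dim_col (perfect_shuffle k b) = k*b"
  by (simp_all add: perfect_shuffle_def)

lemma perfect_shuffle_carrier: "perfect_shuffle k b \<in> carrier_mat (k*b) (k*b)"
  by (rule carrier_matI) simp_all

lemma transpose_perfect_shuffle_carrier:
  "transpose_mat (perfect_shuffle k b) \<in> carrier_mat (k*b) (k*b)"
  by (rule carrier_matI) simp_all

lemma index_perfect_shuffle:
  assumes "i < k*b" "j < k*b"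
  shows "perfect_shuffle k b $$ (i,j) = (if i = shuffle_index k b j then 1 else 0)"
  using assms by (simp add: perfect_shuffle_def shuffle_index_def)

lemma index_mult_perfect_shuffle:
  assumes X: "X \<in> carrier_mat n (k*b)" and "i < n" "j < k*b"
  shows "(X * perfect_shuffle k b) $$ (i,j) = X $$ (i, shuffle_index k b j)"
proof -
  have "(X * perfect_shuffle k b) $$ (i,j) = (\<Sum>l<k*b. X $$ (i,l) * perfect_shuffle k b $$ (l,j))"
    using assms by (intro index_mult_mat_sum[OF X perfect_shuffle_carrier])
  also have "\<dots> = (\<Sum>l<k*b. if l = shuffle_index k b j then X $$ (i,l) else 0)"
    using assms by (intro sum.cong) (simp_all add: index_perfect_shuffle)
  also have "\<dots> = X $$ (i, shuffle_index k b j)"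
    using shuffle_index_less[OF \<open>j < k*b\<close>] by simp
  finally show ?thesis .
qed

lemma index_transpose_perfect_shuffle_mult:
  assumes X: "X \<in> carrier_mat (k*b) n" and "i < k*b" "j < n"
  shows "(transpose_mat (perfect_shuffle k b) * X) $$ (i,j) = X $$ (shuffle_index k b i, j)"
proof -
  have "(transpose_mat (perfect_shuffle k b) * X) $$ (i,j)
      = (\<Sum>l<k*b. transpose_mat (perfect_shuffle k b) $$ (i,l) * X $$ (l,j))"
    using assms by (intro index_mult_mat_sum[OF transpose_perfect_shuffle_carrier X])
  also have "\<dots> = (\<Sum>l<k*b. if l = shuffle_index k b i then X $$ (l,j) else 0)"
    using assms by (intro sum.cong) (simp_all add: index_perfect_shuffle)
  also have "\<dots> = X $$ (shuffle_index k b i, j)"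
    using shuffle_index_less[OF \<open>i < k*b\<close>] by simp
  finally show ?thesis .
qed

lemma index_perfect_shuffle_conj:
  assumes "X \<in> carrier_mat (k*b) (k*b)" "i < k*b" "j < k*b"
  shows "(transpose_mat (perfect_shuffle k b) * X * perfect_shuffle k b) $$ (i,j)
       = X $$ (shuffle_index k b i, shuffle_index k b j)"
proof -
  have "transpose_mat (perfect_shuffle k b) * X \<in> carrier_mat (k*b) (k*b)"
    by (rule mult_carrier_mat[OF transpose_perfect_shuffle_carrier assms(1)])
  then have "(transpose_mat (perfect_shuffle k b) * X * perfect_shuffle k b) $$ (i,j)
      = (transpose_mat (perfect_shuffle k b) * X) $$ (i, shuffle_index k b j)"
    using assms(2,3) by (rule index_mult_perfect_shuffle)
  also have "\<dots> = X $$ (shuffle_index k b i, shuffle_index k b j)"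
    using assms shuffle_index_less by (intro index_transpose_perfect_shuffle_mult)
  finally show ?thesis .
qed

lemma perfect_shuffle_orth: "perfect_shuffle k b \<in> orth_mats (k*b)"
proof -
  let ?P = "perfect_shuffle k b"
  have "transpose_mat ?P * ?P = transpose_mat ?P * 1\<^sub>m (k*b) * ?P"
    using right_mult_one_mat[OF transpose_perfect_shuffle_carrier] by simp
  also have "\<dots> = 1\<^sub>m (k*b)"
  proof (rule eq_matI)
    fix i j assume "i < dim_row (1\<^sub>m (k*b))" "j < dim_col (1\<^sub>m (k*b))"
    then have ij: "i < k*b" "j < k*b" by simp_all
    then show "(transpose_mat ?P * 1\<^sub>m (k*b) * ?P) $$ (i,j) = 1\<^sub>m (k*b) $$ (i,j)"
      by (simp only: index_perfect_shuffle_conj[OF one_carrier_mat ij])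
         (auto simp: shuffle_index_less dest: shuffle_index_inj)
  qed simp_all
  finally show ?thesis
    unfolding orth_mats_def using perfect_shuffle_carrier by blast
qed

lemma orth_stabilizer_eq_conj:
  assumes Q: "Q \<in> orth_mats n" and B1: "B1 \<in> orth_mats n" and B2: "B2 \<in> carrier_mat n n"
    and stable: "B2 * Q * transpose_mat B1 = Q"
  shows "B1 = transpose_mat Q * B2 * Q"
proof -
  have Qc: "Q \<in> carrier_mat n n" and B1c: "B1 \<in> carrier_mat n n"
    using Q B1 by (simp_all add: orth_mats_def)
  have "Q * B1 = B2 * Q * transpose_mat B1 * B1"
    by (simp add: stable)
  also have "\<dots> = B2 * Q * (transpose_mat B1 * B1)"
    using B1c B2 Qc by (intro assoc_mult_mat[of _ n n _ n _ n]) auto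
  also have "\<dots> = B2 * Q"
    using B1 B2 Qc by (simp add: orth_mats_def right_mult_one_mat[of _ n n])
  finally have "Q * B1 = B2 * Q" .
  then have "transpose_mat Q * B2 * Q = transpose_mat Q * (Q * B1)"
    using B2 Qc by (simp add: assoc_mult_mat[of _ n n _ n _ n])
  also have "\<dots> = transpose_mat Q * Q * B1"
    using B1c Qc by (intro assoc_mult_mat[symmetric, of _ n n _ n _ n]) auto
  also have "\<dots> = B1"
    using Q B1c by (simp add: orth_mats_def)
  finally show ?thesis by simp
qed

lemma sum_lessThan_mult_split:
  fixes f :: "nat \<Rightarrow> 'a::comm_monoid_add"
  shows "(\<Sum>l<k*b. f l) = (\<Sum>a<k. \<Sum>c<b. f (a*b + c))"
proof -
  have "(\<Sum>l<k*b. f l) = (\<Sum>a<k. sum f {a*b..<a*b + b})"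
    using sum.nat_group[of f b k] by simp
  also have "\<dots> = (\<Sum>a<k. \<Sum>c<b. f (a*b + c))"
  proof (rule sum.cong[OF refl])
    fix a
    show "sum f {a*b..<a*b + b} = (\<Sum>c<b. f (a*b + c))"
      using sum.shift_bounds_nat_ivl[of f 0 "a*b" b]
      by (simp add: add.commute lessThan_atLeast0)
  qed
  finally show ?thesis .
qed

lemma block_index_less:
  fixes a b c k :: nat
  assumes "a < k" "c < b"
  shows "a*b + c < k*b"
proof -
  have "a*b + c < Suc a * b" using assms(2) by simp
  also have "\<dots> \<le> k*b" using assms(1) by (intro mult_le_mono1) simp
  finally show ?thesis .
qed

lemma dim_block_diag [simp]:
  "dim_row (block_diag k b M) = k*b" "dim_col (block_diag k b M) = k*b"
  by (simp_all add: block_diag_def)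

lemma block_diag_carrier: "block_diag k b M \<in> carrier_mat (k*b) (k*b)"
  by (rule carrier_matI) simp_all

lemma index_block_diag:
  assumes "i < k*b" "j < k*b"
  shows "block_diag k b M $$ (i,j)
       = (if i div b = j div b then M (i div b) $$ (i mod b, j mod b) else 0)"
  using assms by (simp add: block_diag_def)

lemma index_block_diag_block:
  assumes "i < k*b" "a < k" "c < b"
  shows "block_diag k b M $$ (i, a*b + c) = (if i div b = a then M a $$ (i mod b, c) else 0)"
    and "block_diag k b M $$ (a*b + c, i) = (if a = i div b then M a $$ (c, i mod b) else 0)"
  using assms block_index_less[OF assms(2,3)] by (simp_all add: index_block_diag)

lemma block_diag_mult:
  assumes M: "\<And>a. a < k \<Longrightarrow> M a \<in> carrier_mat b b"
    and M': "\<And>a. a < k \<Longrightarrow> M' a \<in> carrier_mat b b"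
  shows "block_diag k b M * block_diag k b M' = block_diag k b (\<lambda>a. M a * M' a)"
proof (rule eq_matI)
  fix i j assume "i < dim_row (block_diag k b (\<lambda>a. M a * M' a))"
    "j < dim_col (block_diag k b (\<lambda>a. M a * M' a))"
  then have ij: "i < k*b" "j < k*b" by simp_all
  then have "0 < b" by (cases b) auto
  have blk: "i div b < k" using ij by (simp add: less_mult_imp_div_less)
  have "(block_diag k b M * block_diag k b M') $$ (i,j)
      = (\<Sum>l<k*b. block_diag k b M $$ (i,l) * block_diag k b M' $$ (l,j))"
    by (rule index_mult_mat_sum[OF block_diag_carrier block_diag_carrier ij])
  also have "\<dots> = (\<Sum>a<k. \<Sum>c<b. block_diag k b M $$ (i, a*b + c) * block_diag k b M' $$ (a*b + c, j))"
    by (rule sum_lessThan_mult_split)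
  also have "\<dots> = (\<Sum>a<k. if a = i div b then
      (if i div b = j div b then \<Sum>c<b. M a $$ (i mod b, c) * M' a $$ (c, j mod b) else 0) else 0)"
    using ij by (intro sum.cong refl) (auto simp: index_block_diag_block)
  also have "\<dots> = (if i div b = j div b
      then \<Sum>c<b. M (i div b) $$ (i mod b, c) * M' (i div b) $$ (c, j mod b) else 0)"
    using blk by simp
  also have "\<dots> = block_diag k b (\<lambda>a. M a * M' a) $$ (i,j)"
    using ij blk \<open>0 < b\<close> by (simp add: index_block_diag index_mult_mat_sum[OF M M'])
  finally show "(block_diag k b M * block_diag k b M') $$ (i,j) = block_diag k b (\<lambda>a. M a * M' a) $$ (i,j)" .
qed simp_all

lemma transpose_block_diag:
  assumes "\<And>a. a < k \<Longrightarrow> M a \<in> carrier_mat b b"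
  shows "transpose_mat (block_diag k b M) = block_diag k b (\<lambda>a. transpose_mat (M a))"
proof (rule eq_matI)
  fix i j assume "i < dim_row (block_diag k b (\<lambda>a. transpose_mat (M a)))"
    "j < dim_col (block_diag k b (\<lambda>a. transpose_mat (M a)))"
  then have ij: "i < k*b" "j < k*b" by simp_all
  then have "0 < b" by (cases b) auto
  have "j div b < k" using ij by (simp add: less_mult_imp_div_less)
  then have "M (j div b) \<in> carrier_mat b b" by (rule assms)
  then show "transpose_mat (block_diag k b M) $$ (i,j) = block_diag k b (\<lambda>a. transpose_mat (M a)) $$ (i,j)"
    using ij \<open>0 < b\<close> by (auto simp: index_block_diag)
qed simp_all

lemma block_diag_one:
  assumes "\<And>a. a < k \<Longrightarrow> M a = 1\<^sub>m b"
  shows "block_diag k b M = 1\<^sub>m (k*b)"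
proof (rule eq_matI)
  fix i j assume "i < dim_row (1\<^sub>m (k*b))" "j < dim_col (1\<^sub>m (k*b))"
  then have ij: "i < k*b" "j < k*b" by simp_all
  then have "0 < b" by (cases b) auto
  have "i div b < k" using ij by (simp add: less_mult_imp_div_less)
  moreover have "(i div b = j div b \<and> i mod b = j mod b) = (i = j)"
    by (metis div_mult_mod_eq)
  ultimately show "block_diag k b M $$ (i,j) = 1\<^sub>m (k*b) $$ (i,j)"
    using ij assms \<open>0 < b\<close> by (auto simp: index_block_diag)
qed simp_all

lemma block_group_carrier: "B \<in> block_group S k b \<Longrightarrow> B \<in> carrier_mat (k*b) (k*b)"
  by (auto simp: block_group_def block_diag_carrier)

lemma block_group_orth: "block_group orth_mats k b \<subseteq> orth_mats (k*b)"
proof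
  fix B assume "B \<in> block_group orth_mats k b"
  then obtain M where B: "B = block_diag k b M" and M: "\<And>a. a < k \<Longrightarrow> M a \<in> orth_mats b"
    by (auto simp: block_group_def)
  have Mc: "\<And>a. a < k \<Longrightarrow> M a \<in> carrier_mat b b"
    using M by (simp add: orth_mats_def)
  have "transpose_mat B * B = block_diag k b (\<lambda>a. transpose_mat (M a) * M a)"
    using Mc by (simp add: B transpose_block_diag block_diag_mult)
  also have "\<dots> = 1\<^sub>m (k*b)"
    using M by (intro block_diag_one) (simp add: orth_mats_def)
  finally show "B \<in> orth_mats (k*b)"
    using B block_diag_carrier by (simp add: orth_mats_def)
qed

lemma block_group_off_block_eq_0:
  assumes "B \<in> block_group S k b" "i < k*b" "j < k*b" "i div b \<noteq> j div b"
  shows "B $$ (i,j) = 0"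
  using assms by (auto simp: block_group_def index_block_diag)

lemma shuffle_conj_block_diag_imp_diagonal:
  assumes N1: "N = k1 * b1" and N2: "N = k2 * b2" and "0 < b2" "b2 \<le> k1"
    and B2: "B2 \<in> block_group S2 k2 b2"
    and B1: "transpose_mat (perfect_shuffle k1 b1) * B2 * perfect_shuffle k1 b1 \<in> block_group S1 k1 b1"
    and "i < N" "j < N" "i \<noteq> j"
  shows "B2 $$ (i,j) = 0"
proof (rule ccontr)
  assume nz: "B2 $$ (i,j) \<noteq> 0"
  let ?C = "transpose_mat (perfect_shuffle k1 b1) * B2 * perfect_shuffle k1 b1"
  let ?\<sigma> = "shuffle_index b1 k1"
  have ij: "i < b1 * k1" "j < b1 * k1" using \<open>i < N\<close> \<open>j < N\<close> N1 by (simp_all add: mult.commute)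
  have "?C $$ (?\<sigma> i, ?\<sigma> j) = B2 $$ (shuffle_index k1 b1 (?\<sigma> i), shuffle_index k1 b1 (?\<sigma> j))"
    using block_group_carrier[OF B2] ij shuffle_index_less N1 N2
    by (intro index_perfect_shuffle_conj) (auto simp: mult.commute)
  also have "\<dots> = B2 $$ (i,j)" using ij by (simp add: shuffle_index_shuffle_index)
  finally have "?C $$ (?\<sigma> i, ?\<sigma> j) \<noteq> 0" using nz by simp
  moreover have "?\<sigma> i < k1 * b1" "?\<sigma> j < k1 * b1"
    using shuffle_index_less[OF ij(1)] shuffle_index_less[OF ij(2)] by (simp_all add: mult.commute)
  ultimately have "?\<sigma> i div b1 = ?\<sigma> j div b1"
    using block_group_off_block_eq_0[OF B1] by blast
  then have "i mod k1 = j mod k1" using ij by (simp add: shuffle_index_div)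
  moreover have "i div b2 = j div b2"
    using block_group_off_block_eq_0[OF B2] nz \<open>i < N\<close> \<open>j < N\<close> N2 by auto
  ultimately have "i = j" using eq_if_div_eq_mod_eq \<open>0 < b2\<close> \<open>b2 \<le> k1\<close> by blast
  with \<open>i \<noteq> j\<close> show False ..
qed

lemma orth_diagonal_imp_signed_diag:
  assumes B: "B \<in> orth_mats n" and diag: "\<And>i j. i < n \<Longrightarrow> j < n \<Longrightarrow> i \<noteq> j \<Longrightarrow> B $$ (i,j) = 0"
  shows "signed_diag n B"
proof -
  have Bc: "B \<in> carrier_mat n n" using B by (simp add: orth_mats_def)
  have "B $$ (i,i) \<in> {1,-1}" if i: "i < n" for i
  proof -
    have "1 = (transpose_mat B * B) $$ (i,i)" using B i by (simp add: orth_mats_def)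
    also have "\<dots> = (\<Sum>l<n. transpose_mat B $$ (i,l) * B $$ (l,i))"
      using i by (intro index_mult_mat_sum[OF _ Bc]) (simp_all add: Bc)
    also have "\<dots> = (\<Sum>l<n. if l = i then B $$ (i,i) * B $$ (i,i) else 0)"
      using i Bc diag by (intro sum.cong) auto
    also have "\<dots> = (B $$ (i,i))\<^sup>2" using i by (simp add: power2_eq_square)
    finally show ?thesis by (simp add: power2_eq_1_iff)
  qed
  then show ?thesis using Bc diag by (auto simp: signed_diag_def)
qed

lemma stab_orth_block_groups:
  assumes N1: "N = k1 * b1" and N2: "N = k2 * b2" and "0 < b2" "b2 \<le> k1"
    and "(B2,B1) \<in> stab (block_group orth_mats k2 b2) (block_group orth_mats k1 b1) (perfect_shuffle k1 b1)"
  shows "signed_diag N B2 \<and> B1 = transpose_mat (perfect_shuffle k1 b1) * B2 * perfect_shuffle k1 b1"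
proof -
  have B2: "B2 \<in> block_group orth_mats k2 b2" and B1: "B1 \<in> block_group orth_mats k1 b1"
    and stable: "B2 * perfect_shuffle k1 b1 * transpose_mat B1 = perfect_shuffle k1 b1"
    using assms(5) by (simp_all add: stab_def)
  have B2o: "B2 \<in> orth_mats N" using B2 block_group_orth N2 by blast
  have conj: "B1 = transpose_mat (perfect_shuffle k1 b1) * B2 * perfect_shuffle k1 b1"
    using B1 block_group_orth B2o perfect_shuffle_orth stable N1
    by (intro orth_stabilizer_eq_conj[where n = N]) (auto simp: orth_mats_def)
  have "signed_diag N B2"
    using B2o shuffle_conj_block_diag_imp_diagonal[OF N1 N2 assms(3,4) B2] B1 conj
    by (intro orth_diagonal_imp_signed_diag) auto
  with conj show ?thesis by blast
qed

lemma finite_signed_diag: "finite {B. signed_diag n B}"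
proof (rule inj_on_finite)
  let ?diag = "\<lambda>B. \<lambda>i\<in>{..<n}. B $$ (i,i)"
  show "inj_on ?diag {B. signed_diag n B}"
  proof (rule inj_onI)
    fix A B assume "A \<in> {B. signed_diag n B}" "B \<in> {B. signed_diag n B}" and eq: "?diag A = ?diag B"
    then have A: "signed_diag n A" and B: "signed_diag n B" by simp_all
    then have Ac: "A \<in> carrier_mat n n" and Bc: "B \<in> carrier_mat n n"
      by (simp_all add: signed_diag_def)
    show "A = B"
    proof (rule eq_matI)
      fix i j assume "i < dim_row B" "j < dim_col B"
      then have ij: "i < n" "j < n" using Bc by simp_all
      show "A $$ (i,j) = B $$ (i,j)"
      proof (cases "i = j")
        case True
        then show ?thesis using fun_cong[OF eq, of i] ij by simp
      next
        case False
        then show ?thesis using A B ij by (simp add: signed_diag_def)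
      qed
    qed (use Ac Bc in simp_all)
  qed
  show "?diag ` {B. signed_diag n B} \<subseteq> PiE {..<n} (\<lambda>_. {1,-1})"
    by (rule image_subsetI) (simp add: restrict_PiE_iff signed_diag_def)
  show "finite (PiE {..<n} (\<lambda>_. {1::real,-1}))"
    by (intro finite_PiE) auto
qed

lemma block_group_mono: "(\<And>b. S b \<subseteq> T b) \<Longrightarrow> block_group S k b \<subseteq> block_group T k b"
  unfolding block_group_def by blast

lemma stab_mono: "G2 \<subseteq> H2 \<Longrightarrow> G1 \<subseteq> H1 \<Longrightarrow> stab G2 G1 P \<subseteq> stab H2 H1 P"
  unfolding stab_def by auto

theorem mainTheorem3:
  fixes N k1 b1 k2 b2 :: nat
  assumes "0 < k1" "0 < b1" "0 < k2" "0 < b2"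
    and "N = k1 * b1" "N = k2 * b2"
    and "k1 \<ge> b2"
  shows "(\<forall>(B2,B1) \<in> stab (block_group orth_mats k2 b2) (block_group orth_mats k1 b1)
                          (perfect_shuffle k1 b1).
            signed_diag N B2 \<and>
            B1 = transpose_mat (perfect_shuffle k1 b1) * B2 * perfect_shuffle k1 b1)
       \<and> finite (stab (block_group orth_mats k2 b2) (block_group orth_mats k1 b1)
                          (perfect_shuffle k1 b1))
       \<and> (\<forall>(B2,B1) \<in> stab (block_group sorth_mats k2 b2) (block_group sorth_mats k1 b1)
                          (perfect_shuffle k1 b1).
            signed_diag N B2 \<and>
            B1 = transpose_mat (perfect_shuffle k1 b1) * B2 * perfect_shuffle k1 b1)
       \<and> finite (stab (block_group sorth_mats k2 b2) (block_group sorth_mats k1 b1)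
                          (perfect_shuffle k1 b1))"
proof -
  let ?P = "perfect_shuffle k1 b1"
  let ?O = "stab (block_group orth_mats k2 b2) (block_group orth_mats k1 b1) ?P"
  let ?SO = "stab (block_group sorth_mats k2 b2) (block_group sorth_mats k1 b1) ?P"
  have O: "\<forall>(B2,B1) \<in> ?O. signed_diag N B2 \<and> B1 = transpose_mat ?P * B2 * ?P"
    using stab_orth_block_groups[OF assms(5,6,4,7)] by blast
  then have "?O \<subseteq> (\<lambda>B. (B, transpose_mat ?P * B * ?P)) ` {B. signed_diag N B}"
    by auto
  then have "finite ?O" by (rule finite_surj[OF finite_signed_diag])
  moreover have "?SO \<subseteq> ?O"
    by (intro stab_mono block_group_mono) (auto simp: sorth_mats_def)
  ultimately show ?thesis using O by (auto intro: finite_subset)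
qed

end
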